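(* Suppose that $\Re s=1$, $u\ge1$, and $|s|>u$. For integers $m,\nu\ge1$, \[ \left|\frac{\partial^\nu}{\partial u^\nu}\left(G(u,s)^m\right)\right|\ll_{m,\nu}\frac{(1+\log|s|)^{m-1}}{u^\nu}\left(\frac{|s|}{u}\right)^{\nu-1}, \] with implied constant depending only on $m,\nu$.
   Context: $G(u,s):=\int_{0}^{1/u}\frac{1-e^{-ts}}{t}\,dt$. *)

theory Defs
  imports "HOL-Analysis.Analysis"
begin

definition G :: "real \<Rightarrow> complex \<Rightarrow> complex" where
  "G u s = integral {0..1/u} (\<lambda>t::real. (1 - exp (- (complex_of_real t * s))) / complex_of_real t)"

fun nderiv :: "nat \<Rightarrow> (real \<Rightarrow> complex) \<Rightarrow> real \<Rightarrow> complex" where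
  "nderiv 0 f = f"
| "nderiv (Suc n) f = (\<lambda>x. vector_derivative (nderiv n f) (at x))"

end

theory Submission
  imports Defs "HOL-Complex_Analysis.Weierstrass_Factorization"
begin

text \<open>Differentiating under the upper limit gives \<open>\<partial>\<^sub>u G(u,s) = (exp(-s/u) - 1)/u\<close>,
  and splitting the integral at \<open>t = 1/(2|s|)\<close> (integrand at most \<open>3|s|/2\<close> before, at most
  \<open>2/t\<close> after) gives \<open>|G(u,s)| \<le> 3 (1 + log |s|)\<close>. Say that a function of \<open>(s,u)\<close> has
  weight \<open>(a,b)\<close> if it is \<open>O(|s|\<^sup>a / u\<^sup>b)\<close> times a fixed power of \<open>1 + log |s|\<close>. The
  functions \<open>s\<close>, \<open>1/u\<close> and \<open>exp(-s/u)\<close> (of modulus \<open>exp(-1/u) \<le> 1\<close> as \<open>Re s = 1\<close>) have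
  weights \<open>(1,0)\<close>, \<open>(0,1)\<close>, \<open>(0,0)\<close>, and differentiating any of them in \<open>u\<close> adds at most
  \<open>(1,2)\<close>. Weights add under products, and because \<open>u < |s|\<close> a weight \<open>(a,b)\<close> implies
  \<open>(a+1,b+1)\<close>, so the terms of a sum can be brought to a common weight. Hence the \<open>k\<close>-th
  derivative of \<open>\<partial>\<^sub>u(G\<^sup>m) = m G\<^sup>m\<^sup>-\<^sup>1 \<partial>\<^sub>u G\<close> has weight \<open>(k, 2k+1)\<close> with log power
  \<open>m - 1\<close>, which is the claim for \<open>\<nu> = k + 1\<close>.\<close>

definition admissible :: "complex \<Rightarrow> real \<Rightarrow> bool" where
  "admissible s u \<longleftrightarrow> Re s = 1 \<and> 1 \<le> u \<and> u < cmod s"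

definition log_weight :: "complex \<Rightarrow> real" where
  "log_weight s = 1 + ln (cmod s)"

definition weight_bounded :: "nat \<Rightarrow> nat \<Rightarrow> nat \<Rightarrow> (complex \<Rightarrow> real \<Rightarrow> complex) \<Rightarrow> bool" where
  "weight_bounded a b l f \<longleftrightarrow>
     (\<exists>C\<ge>0. \<forall>s u. admissible s u \<longrightarrow> cmod (f s u) \<le> C * log_weight s ^ l * cmod s ^ a / u ^ b)"

text \<open>The \<open>k\<close>-th \<open>u\<close>-derivative, \<open>k \<le> N\<close>, has weight \<open>(a + k, b + 2k)\<close>.\<close>
fun derivs_bounded :: "nat \<Rightarrow> nat \<Rightarrow> nat \<Rightarrow> nat \<Rightarrow> (complex \<Rightarrow> real \<Rightarrow> complex) \<Rightarrow> bool" where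
  "derivs_bounded 0 a b l f \<longleftrightarrow> weight_bounded a b l f"
| "derivs_bounded (Suc N) a b l f \<longleftrightarrow> weight_bounded a b l f \<and>
     (\<exists>f'. (\<forall>s u. 0 < u \<longrightarrow> (f s has_vector_derivative f' s u) (at u)) \<and>
           derivs_bounded N (Suc a) (b + 2) l f')"

lemma admissibleD:
  assumes "admissible s u"
  shows "Re s = 1" "0 < u" "1 \<le> u" "u < cmod s" "1 < cmod s" "1 \<le> log_weight s"
  using assms unfolding admissible_def log_weight_def by auto

subsection \<open>Weight bounds\<close>

lemma weight_nonneg:
  assumes "admissible s u" "C \<ge> 0"
  shows "0 \<le> C * log_weight s ^ l * cmod s ^ a / u ^ b"
  using admissibleD[OF assms(1)] assms(2) by simp

lemma weight_boundedI:
  assumes "C \<ge> 0" "\<And>s u. admissible s u \<Longrightarrow> cmod (f s u) \<le> C * log_weight s ^ l * cmod s ^ a / u ^ b"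
  shows "weight_bounded a b l f"
  using assms unfolding weight_bounded_def by blast

lemma weight_boundedE:
  assumes "weight_bounded a b l f"
  obtains C where "C \<ge> 0"
    "\<And>s u. admissible s u \<Longrightarrow> cmod (f s u) \<le> C * log_weight s ^ l * cmod s ^ a / u ^ b"
  using assms that unfolding weight_bounded_def by blast

lemma weight_bounded_shift:
  assumes "weight_bounded a b l f"
  shows "weight_bounded (Suc a) (Suc b) l f"
proof -
  obtain C where C: "C \<ge> 0"
    "\<And>s u. admissible s u \<Longrightarrow> cmod (f s u) \<le> C * log_weight s ^ l * cmod s ^ a / u ^ b"
    using weight_boundedE[OF assms] by blast
  show ?thesis
  proof (rule weight_boundedI[OF C(1)])
    fix s u assume adm: "admissible s u"
    note F = admissibleD[OF adm]
    have "1 \<le> cmod s / u"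
      using F by simp
    from mult_left_mono[OF this weight_nonneg[OF adm C(1)]]
    have "C * log_weight s ^ l * cmod s ^ a / u ^ b \<le> C * log_weight s ^ l * cmod s ^ a / u ^ b * (cmod s / u)"
      by (simp only: mult_1_right)
    also have "\<dots> = C * log_weight s ^ l * cmod s ^ Suc a / u ^ Suc b"
      by (simp add: field_simps)
    finally show "cmod (f s u) \<le> C * log_weight s ^ l * cmod s ^ Suc a / u ^ Suc b"
      using C(2)[OF adm] by linarith
  qed
qed


lemma weight_bounded_log_mono:
  assumes "weight_bounded a b l f" "l \<le> l'"
  shows "weight_bounded a b l' f"
proof -
  obtain C where C: "C \<ge> 0"
    "\<And>s u. admissible s u \<Longrightarrow> cmod (f s u) \<le> C * log_weight s ^ l * cmod s ^ a / u ^ b"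
    using weight_boundedE[OF assms(1)] by blast
  show ?thesis
  proof (rule weight_boundedI[OF C(1)])
    fix s u assume adm: "admissible s u"
    note F = admissibleD[OF adm]
    have "log_weight s ^ l \<le> log_weight s ^ l'"
      using F assms(2) by (simp add: power_increasing)
    then have "C * log_weight s ^ l * cmod s ^ a / u ^ b \<le> C * log_weight s ^ l' * cmod s ^ a / u ^ b"
      using C F by (intro divide_right_mono mult_right_mono mult_left_mono) auto
    then show "cmod (f s u) \<le> C * log_weight s ^ l' * cmod s ^ a / u ^ b"
      using C(2)[OF adm] by linarith
  qed
qed

lemma weight_bounded_add:
  assumes "weight_bounded a b l f" "weight_bounded a b l g"
  shows "weight_bounded a b l (\<lambda>s u. f s u + g s u)"
proof -
  obtain C where C: "C \<ge> 0"
    "\<And>s u. admissible s u \<Longrightarrow> cmod (f s u) \<le> C * log_weight s ^ l * cmod s ^ a / u ^ b"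
    using weight_boundedE[OF assms(1)] by blast
  obtain D where D: "D \<ge> 0"
    "\<And>s u. admissible s u \<Longrightarrow> cmod (g s u) \<le> D * log_weight s ^ l * cmod s ^ a / u ^ b"
    using weight_boundedE[OF assms(2)] by blast
  show ?thesis
  proof (rule weight_boundedI[of "C + D"])
    fix s u assume adm: "admissible s u"
    have "cmod (f s u + g s u) \<le> cmod (f s u) + cmod (g s u)"
      by (rule norm_triangle_ineq)
    also have "\<dots> \<le> (C + D) * log_weight s ^ l * cmod s ^ a / u ^ b"
      using C(2)[OF adm] D(2)[OF adm] by (simp add: field_simps add_divide_distrib)
    finally show "cmod (f s u + g s u) \<le> (C + D) * log_weight s ^ l * cmod s ^ a / u ^ b" .
  qed (use C D in simp)
qed

lemma weight_bounded_cmult: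
  assumes "weight_bounded a b l f"
  shows "weight_bounded a b l (\<lambda>s u. c * f s u)"
proof -
  obtain C where C: "C \<ge> 0"
    "\<And>s u. admissible s u \<Longrightarrow> cmod (f s u) \<le> C * log_weight s ^ l * cmod s ^ a / u ^ b"
    using weight_boundedE[OF assms] by blast
  show ?thesis
  proof (rule weight_boundedI[of "cmod c * C"])
    fix s u assume adm: "admissible s u"
    have "cmod (c * f s u) \<le> cmod c * (C * log_weight s ^ l * cmod s ^ a / u ^ b)"
      unfolding norm_mult using C(2)[OF adm] by (intro mult_left_mono) auto
    then show "cmod (c * f s u) \<le> cmod c * C * log_weight s ^ l * cmod s ^ a / u ^ b"
      by simp
  qed (use C in simp)
qed

lemma weight_bounded_mult:
  assumes "weight_bounded a b l f" "weight_bounded a' b' l' g"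
  shows "weight_bounded (a + a') (b + b') (l + l') (\<lambda>s u. f s u * g s u)"
proof -
  obtain C where C: "C \<ge> 0"
    "\<And>s u. admissible s u \<Longrightarrow> cmod (f s u) \<le> C * log_weight s ^ l * cmod s ^ a / u ^ b"
    using weight_boundedE[OF assms(1)] by blast
  obtain D where D: "D \<ge> 0"
    "\<And>s u. admissible s u \<Longrightarrow> cmod (g s u) \<le> D * log_weight s ^ l' * cmod s ^ a' / u ^ b'"
    using weight_boundedE[OF assms(2)] by blast
  show ?thesis
  proof (rule weight_boundedI[of "C * D"])
    fix s u assume adm: "admissible s u"
    have "cmod (f s u * g s u)
        \<le> (C * log_weight s ^ l * cmod s ^ a / u ^ b) * (D * log_weight s ^ l' * cmod s ^ a' / u ^ b')"
      unfolding norm_mult using C(2)[OF adm] D(2)[OF adm] order_trans[OF norm_ge_zero C(2)[OF adm]]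
      by (intro mult_mono) auto
    also have "\<dots> = C * D * log_weight s ^ (l + l') * cmod s ^ (a + a') / u ^ (b + b')"
      by (simp add: power_add field_simps)
    finally show "cmod (f s u * g s u) \<le> C * D * log_weight s ^ (l + l') * cmod s ^ (a + a') / u ^ (b + b')" .
  qed (use C D in simp)
qed

lemma weight_bounded_zero: "weight_bounded a b l (\<lambda>s u. 0)"
  by (rule weight_boundedI[of 0]) auto

lemma weight_bounded_const: "weight_bounded 0 0 0 (\<lambda>s u. c)"
  by (rule weight_boundedI[of "cmod c"]) auto

lemma weight_bounded_var: "weight_bounded 1 0 0 (\<lambda>s u. s)"
  by (rule weight_boundedI[of 1]) auto

lemma derivs_bounded_imp_weight_bounded: "derivs_bounded N a b l f \<Longrightarrow> weight_bounded a b l f"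
  by (cases N) auto

lemma derivs_bounded_Suc_imp: "derivs_bounded (Suc N) a b l f \<Longrightarrow> derivs_bounded N a b l f"
proof (induction N arbitrary: a b f)
  case 0
  then show ?case by simp
next
  case (Suc N)
  then show ?case by (metis derivs_bounded.simps(2))
qed

lemma derivs_bounded_zero: "derivs_bounded N a b l (\<lambda>s u. 0)"
  by (induction N arbitrary: a b) (auto simp: weight_bounded_zero intro!: exI[of _ "\<lambda>s u. 0"])

lemma derivs_bounded_const: "derivs_bounded N 0 0 0 (\<lambda>s u. c)"
  by (cases N) (auto simp: weight_bounded_const derivs_bounded_zero intro!: exI[of _ "\<lambda>s u. 0"])

lemma derivs_bounded_var: "derivs_bounded N 1 0 0 (\<lambda>s u. s)"
  using weight_bounded_var by (cases N) (auto simp: derivs_bounded_zero intro!: exI[of _ "\<lambda>s u. 0"])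

lemma derivs_bounded_shift: "derivs_bounded N a b l f \<Longrightarrow> derivs_bounded N (Suc a) (Suc b) l f"
proof (induction N arbitrary: a b f)
  case 0
  then show ?case by (simp add: weight_bounded_shift)
next
  case (Suc N)
  then obtain f' where "\<forall>s u. 0 < u \<longrightarrow> (f s has_vector_derivative f' s u) (at u)"
    "derivs_bounded N (Suc a) (b + 2) l f'" "weight_bounded a b l f" by auto
  then show ?case using Suc.IH by (auto intro!: exI[of _ f'] weight_bounded_shift)
qed

lemma derivs_bounded_log_mono: "derivs_bounded N a b l f \<Longrightarrow> l \<le> l' \<Longrightarrow> derivs_bounded N a b l' f"
proof (induction N arbitrary: a b f)
  case 0
  then show ?case by (simp add: weight_bounded_log_mono)
next
  case (Suc N)
  then obtain f' where "\<forall>s u. 0 < u \<longrightarrow> (f s has_vector_derivative f' s u) (at u)"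
    "derivs_bounded N (Suc a) (b + 2) l f'" "weight_bounded a b l f" by auto
  then show ?case using Suc weight_bounded_log_mono by (auto intro!: exI[of _ f'])
qed

lemma derivs_bounded_add:
  "derivs_bounded N a b l f \<Longrightarrow> derivs_bounded N a b l g \<Longrightarrow> derivs_bounded N a b l (\<lambda>s u. f s u + g s u)"
proof (induction N arbitrary: a b f g)
  case 0
  then show ?case by (simp add: weight_bounded_add)
next
  case (Suc N)
  from Suc.prems(1) obtain f' where f': "\<forall>s u. 0 < u \<longrightarrow> (f s has_vector_derivative f' s u) (at u)"
    "derivs_bounded N (Suc a) (b + 2) l f'" "weight_bounded a b l f" by auto
  from Suc.prems(2) obtain g' where g': "\<forall>s u. 0 < u \<longrightarrow> (g s has_vector_derivative g' s u) (at u)"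
    "derivs_bounded N (Suc a) (b + 2) l g'" "weight_bounded a b l g" by auto
  show ?case
    using f' g' Suc.IH
    by (auto simp: weight_bounded_add intro!: exI[of _ "\<lambda>s u. f' s u + g' s u"] has_vector_derivative_add)
qed

lemma derivs_bounded_cmult: "derivs_bounded N a b l f \<Longrightarrow> derivs_bounded N a b l (\<lambda>s u. c * f s u)"
proof (induction N arbitrary: a b f)
  case 0
  then show ?case by (simp add: weight_bounded_cmult)
next
  case (Suc N)
  from Suc.prems obtain f' where f': "\<forall>s u. 0 < u \<longrightarrow> (f s has_vector_derivative f' s u) (at u)"
    "derivs_bounded N (Suc a) (b + 2) l f'" "weight_bounded a b l f" by auto
  show ?case
    using f' Suc.IH
    by (auto simp: weight_bounded_cmult intro!: exI[of _ "\<lambda>s u. c * f' s u"] has_vector_derivative_mult_right)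
qed

text \<open>Leibniz rule: both terms of \<open>(f g)' = f g' + f' g\<close> carry the weight of \<open>f g\<close> shifted by \<open>(1,2)\<close>.\<close>
lemma derivs_bounded_mult:
  "derivs_bounded N a b l f \<Longrightarrow> derivs_bounded N a' b' l' g \<Longrightarrow>
   derivs_bounded N (a + a') (b + b') (l + l') (\<lambda>s u. f s u * g s u)"
proof (induction N arbitrary: a b l f a' b' l' g)
  case 0
  then show ?case by (simp add: weight_bounded_mult)
next
  case (Suc N)
  from Suc.prems(1) obtain f' where f': "\<forall>s u. 0 < u \<longrightarrow> (f s has_vector_derivative f' s u) (at u)"
    "derivs_bounded N (Suc a) (b + 2) l f'" "weight_bounded a b l f" by auto
  from Suc.prems(2) obtain g' where g': "\<forall>s u. 0 < u \<longrightarrow> (g s has_vector_derivative g' s u) (at u)"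
    "derivs_bounded N (Suc a') (b' + 2) l' g'" "weight_bounded a' b' l' g" by auto
  have "derivs_bounded N a b l f" "derivs_bounded N a' b' l' g"
    using Suc.prems derivs_bounded_Suc_imp by auto
  then have "derivs_bounded N (Suc (a + a')) (b + b' + 2) (l + l') (\<lambda>s u. f s u * g' s u)"
    and "derivs_bounded N (Suc (a + a')) (b + b' + 2) (l + l') (\<lambda>s u. f' s u * g s u)"
    using Suc.IH[of a b l f "Suc a'" "b' + 2" l' g'] Suc.IH[of "Suc a" "b + 2" l f' a' b' l' g] f'(2) g'(2)
    by (simp_all add: ac_simps)
  then show ?case
    using f' g'
    by (auto simp: weight_bounded_mult intro!: exI[of _ "\<lambda>s u. f s u * g' s u + f' s u * g s u"]
        derivs_bounded_add has_vector_derivative_mult)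
qed

lemma nderiv_Suc_inner: "nderiv (Suc n) f = nderiv n (\<lambda>x. vector_derivative f (at x))"
  by (induction n arbitrary: f) simp_all

lemma nderiv_cong_open:
  assumes "open S" "\<And>x. x \<in> S \<Longrightarrow> f x = g x" "x \<in> S"
  shows "nderiv n f x = nderiv n g x"
  using assms
proof (induction n arbitrary: f g x)
  case 0
  then show ?case by simp
next
  case (Suc n)
  have "vector_derivative f (at y) = vector_derivative g (at y)" if "y \<in> S" for y
    using Suc.prems(1,2) that
    by (intro vector_derivative_cong_eq) (auto simp: eventually_nhds)
  then show ?case
    unfolding nderiv_Suc_inner using Suc.prems(1,3) by (intro Suc.IH) auto
qed

lemma nderiv_eq_derivative:
  assumes "\<And>v. 0 < v \<Longrightarrow> (f has_vector_derivative f' v) (at v)" "0 < u"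
  shows "nderiv (Suc n) f u = nderiv n f' u"
  unfolding nderiv_Suc_inner using assms
  by (intro nderiv_cong_open[of "{0<..}"]) (auto intro: vector_derivative_at)

lemma derivs_bounded_nderiv:
  assumes "derivs_bounded N a b l f" "n \<le> N"
  shows "\<exists>C. \<forall>s u. admissible s u \<longrightarrow>
           cmod (nderiv n (f s) u) \<le> C * log_weight s ^ l * cmod s ^ (a + n) / u ^ (b + 2 * n)"
  using assms
proof (induction N arbitrary: n a b f)
  case 0
  then show ?case by (auto simp: weight_bounded_def)
next
  case (Suc N)
  from Suc.prems(1) obtain f' where f': "\<forall>s u. 0 < u \<longrightarrow> (f s has_vector_derivative f' s u) (at u)"
    "derivs_bounded N (Suc a) (b + 2) l f'" "weight_bounded a b l f" by auto
  show ?case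
  proof (cases n)
    case 0
    then show ?thesis using f'(3) by (auto simp: weight_bounded_def)
  next
    case (Suc k)
    with Suc.prems(2) Suc.IH[OF f'(2), of k] obtain C where
      C: "\<forall>s u. admissible s u \<longrightarrow>
            cmod (nderiv k (f' s) u) \<le> C * log_weight s ^ l * cmod s ^ (Suc a + k) / u ^ (b + 2 + 2 * k)"
      by auto
    have "nderiv n (f s) u = nderiv k (f' s) u" if "admissible s u" for s u
      unfolding Suc using f'(1) admissibleD(2)[OF that] by (intro nderiv_eq_derivative) auto
    with C Suc show ?thesis by (intro exI[of _ C]) auto
  qed
qed

subsection \<open>The function \<open>G\<close>\<close>

text \<open>The integrand of \<open>G\<close>, extended continuously to \<open>t = 0\<close>.\<close>
definition G_integrand :: "complex \<Rightarrow> real \<Rightarrow> complex" where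
  "G_integrand s t = (if t = 0 then s else (1 - exp (- (complex_of_real t * s))) / complex_of_real t)"

definition dG :: "complex \<Rightarrow> real \<Rightarrow> complex" where
  "dG s u = (exp (- (s / complex_of_real u)) - 1) / complex_of_real u"

lemma isCont_G_integrand_0: "isCont (G_integrand s) 0"
proof (cases "s = 0")
  case True
  then have "G_integrand s = (\<lambda>_. 0)" by (auto simp: G_integrand_def fun_eq_iff)
  then show ?thesis by simp
next
  case False
  have lim: "filterlim (\<lambda>t::real. - (complex_of_real t * s)) (at 0) (at 0)"
  proof (rule filterlim_atI)
    show "((\<lambda>t::real. - (complex_of_real t * s)) \<longlongrightarrow> 0) (at 0)"
      by (auto intro!: tendsto_eq_intros)
    show "\<forall>\<^sub>F t in at (0::real). - (complex_of_real t * s) \<noteq> 0"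
      using False by (auto simp: eventually_at_filter)
  qed
  have "((\<lambda>t. s * ((exp (- (complex_of_real t * s)) - 1) / - (complex_of_real t * s))) \<longlongrightarrow> s * 1) (at 0)"
    by (intro tendsto_mult tendsto_const filterlim_compose[OF lim_exp_minus_1 lim])
  moreover have "\<forall>\<^sub>F t in at (0::real).
      s * ((exp (- (complex_of_real t * s)) - 1) / - (complex_of_real t * s)) = G_integrand s t"
    using False by (auto simp: eventually_at_filter G_integrand_def divide_simps)
  ultimately have "(G_integrand s \<longlongrightarrow> s) (at 0)"
    by (auto intro: Lim_transform_eventually)
  then show ?thesis
    by (simp add: isCont_def G_integrand_def)
qed

lemma continuous_on_G_integrand: "continuous_on A (G_integrand s)"
proof -
  have "isCont (G_integrand s) t" for t
  proof (cases "t = 0")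
    case True
    then show ?thesis using isCont_G_integrand_0 by simp
  next
    case False
    have cont: "isCont (\<lambda>t. (1 - exp (- (complex_of_real t * s))) / complex_of_real t) t"
      using False by (intro continuous_intros) auto
    have "\<forall>\<^sub>F y in nhds t. (1 - exp (- (complex_of_real y * s))) / complex_of_real y = G_integrand s y"
      using t1_space_nhds[OF False] by eventually_elim (simp add: G_integrand_def)
    from isCont_cong[OF this] cont show ?thesis
      by simp
  qed
  then show ?thesis
    by (simp add: continuous_at_imp_continuous_on)
qed

lemma G_eq_integral_G_integrand: "G v s = integral {0..1/v} (G_integrand s)"
  unfolding G_def by (rule integral_spike[of "{0}"]) (simp_all add: G_integrand_def)

lemma integral_G_integrand_has_vector_derivative:
  assumes "0 < w"
  shows "((\<lambda>w. integral {0..w} (G_integrand s)) has_vector_derivative G_integrand s w) (at w)"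
proof -
  have "((\<lambda>w. integral {0..w} (G_integrand s)) has_vector_derivative G_integrand s w) (at w within {0..w+1})"
    using assms by (intro integral_has_vector_derivative continuous_on_G_integrand) auto
  then have "((\<lambda>w. integral {0..w} (G_integrand s)) has_vector_derivative G_integrand s w) (at w within {0<..<w+1})"
    by (rule has_vector_derivative_within_subset) auto
  moreover have "at w within {0<..<w+1} = at w"
    using assms by (intro at_within_open) auto
  ultimately show ?thesis by simp
qed

lemma G_has_vector_derivative:
  assumes "0 < u"
  shows "((\<lambda>v. G v s) has_vector_derivative dG s u) (at u)"
proof -
  have inv: "((\<lambda>v::real. 1 / v) has_vector_derivative - 1 / u\<^sup>2) (at u)"
    using assms unfolding has_real_derivative_iff_has_vector_derivative[symmetric]
    by (auto intro!: derivative_eq_intros simp: power2_eq_square)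
  have "(((\<lambda>w. integral {0..w} (G_integrand s)) \<circ> (\<lambda>v. 1 / v))
          has_vector_derivative (- 1 / u\<^sup>2) *\<^sub>R G_integrand s (1 / u)) (at u)"
    using assms by (intro vector_diff_chain_at[OF inv] integral_G_integrand_has_vector_derivative) simp
  moreover have "(- 1 / u\<^sup>2) *\<^sub>R G_integrand s (1 / u) = dG s u"
    using assms by (simp add: G_integrand_def dG_def scaleR_conv_of_real field_simps power2_eq_square)
  ultimately have "(((\<lambda>w. integral {0..w} (G_integrand s)) \<circ> (\<lambda>v. 1 / v)) has_vector_derivative dG s u) (at u)"
    by simp
  then show ?thesis
    by (rule has_vector_derivative_transform_within_open[of _ _ _ "{0<..}"])
      (use assms in \<open>auto simp: G_eq_integral_G_integrand\<close>)
qed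

lemma norm_G_integrand_le:
  assumes "0 \<le> t" "t * cmod s \<le> 1/2"
  shows "cmod (G_integrand s t) \<le> 3/2 * cmod s"
proof (cases "t = 0")
  case True
  then show ?thesis by (simp add: G_integrand_def)
next
  case False
  then have t: "0 < t" using assms by simp
  have "cmod (exp (- (complex_of_real t * s)) - 1) \<le> 3/2 * cmod (- (complex_of_real t * s))"
    using assms t by (intro norm_exp_bounds(2)) (simp add: norm_mult)
  then have "cmod (1 - exp (- (complex_of_real t * s))) \<le> 3/2 * cmod s * t"
    using t by (simp add: norm_minus_commute norm_mult algebra_simps)
  then show ?thesis
    using t by (simp add: G_integrand_def norm_divide divide_simps)
qed

lemma norm_G_integrand_le_inverse:
  assumes "0 < t" "Re s = 1"
  shows "cmod (G_integrand s t) \<le> 2 / t"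
proof -
  have "cmod (1 - exp (- (complex_of_real t * s))) \<le> 1 + exp (- t)"
    using norm_triangle_ineq4[of 1 "exp (- (complex_of_real t * s))"] assms by simp
  also have "\<dots> \<le> 2"
    using assms by simp
  finally show ?thesis
    using assms by (simp add: G_integrand_def norm_divide divide_right_mono)
qed

lemma norm_integral_G_integrand_initial:
  assumes "0 \<le> c" "c * cmod s \<le> 1/2"
  shows "norm (integral {0..c} (G_integrand s)) \<le> 3/2 * cmod s * c"
proof -
  have "norm (integral {0..c} (G_integrand s)) \<le> 3/2 * cmod s * (c - 0)"
  proof (rule integral_bound)
    fix t assume t: "t \<in> {0..c}"
    then have "t * cmod s \<le> c * cmod s" by (intro mult_right_mono) auto
    with t assms show "norm (G_integrand s t) \<le> 3/2 * cmod s"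
      by (intro norm_G_integrand_le) auto
  qed (use assms continuous_on_G_integrand in auto)
  then show ?thesis by simp
qed

lemma norm_integral_G_integrand_tail:
  assumes "0 < c" "c \<le> b" "Re s = 1"
  shows "norm (integral {c..b} (G_integrand s)) \<le> 2 * ln b - 2 * ln c"
proof -
  have ln: "((\<lambda>t. 2 / t) has_integral (2 * ln b - 2 * ln c)) {c..b}"
  proof (rule fundamental_theorem_of_calculus[OF assms(2)])
    fix x assume "x \<in> {c..b}"
    with assms have "((\<lambda>t. 2 * ln t) has_real_derivative 2 / x) (at x within {c..b})"
      by (auto intro!: derivative_eq_intros)
    then show "((\<lambda>t. 2 * ln t) has_vector_derivative 2 / x) (at x within {c..b})"
      by (simp add: has_real_derivative_iff_has_vector_derivative)
  qed
  have "norm (integral {c..b} (G_integrand s)) \<le> integral {c..b} (\<lambda>t. 2 / t)"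
  proof (rule integral_norm_bound_integral)
    fix t assume "t \<in> {c..b}"
    with assms show "norm (G_integrand s t) \<le> 2 / t"
      by (intro norm_G_integrand_le_inverse) auto
  qed (use ln continuous_on_G_integrand integrable_continuous_interval in blast)+
  then show ?thesis
    using ln by (simp add: integral_unique)
qed

lemma norm_G_le:
  assumes "admissible s u"
  shows "cmod (G u s) \<le> 3 * log_weight s"
proof -
  note F = admissibleD[OF assms]
  define c where "c = 1 / (2 * cmod s)"
  have c: "0 < c" "c \<le> 1 / u" "c * cmod s = 1/2"
    using F by (auto simp: c_def divide_simps)
  have "integral {0..c} (G_integrand s) + integral {c..1/u} (G_integrand s) = G u s"
    unfolding G_eq_integral_G_integrand using c
    by (intro Henstock_Kurzweil_Integration.integral_combine integrable_continuous_interval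
        continuous_on_G_integrand) auto
  then have "cmod (G u s) \<le> norm (integral {0..c} (G_integrand s)) + norm (integral {c..1/u} (G_integrand s))"
    by (metis norm_triangle_ineq)
  also have "\<dots> \<le> 3/4 + (2 * ln (1 / u) - 2 * ln c)"
    using norm_integral_G_integrand_initial[of c s] norm_integral_G_integrand_tail[of c "1/u" s] c F
    by (simp add: algebra_simps)
  also have "\<dots> \<le> 3 * log_weight s"
  proof -
    have "ln c = - ln 2 - ln (cmod s)" "ln (1 / u) \<le> 0" "0 \<le> ln (cmod s)"
      using F by (auto simp: c_def ln_div ln_mult)
    then show ?thesis
      using ln_2_less_1 unfolding log_weight_def distrib_left by linarith
  qed
  finally show ?thesis .
qed

subsection \<open>Derivative bounds for the building blocks\<close>

lemma inverse_of_real_has_vector_derivative: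
  assumes "u \<noteq> 0"
  shows "((\<lambda>u. 1 / complex_of_real u) has_vector_derivative
           (- 1) * (1 / complex_of_real u * (1 / complex_of_real u))) (at u)"
proof -
  have "((\<lambda>z. 1 / z) has_field_derivative (- 1) * (1 / complex_of_real u * (1 / complex_of_real u)))
          (at (complex_of_real u))"
    using assms by (auto intro!: derivative_eq_intros simp: power2_eq_square)
  then show ?thesis
    by (rule has_vector_derivative_real_field)
qed

lemma exp_div_of_real_has_vector_derivative:
  assumes "u \<noteq> 0"
  shows "((\<lambda>u. exp (- (s / complex_of_real u))) has_vector_derivative
           exp (- (s / complex_of_real u)) * (s * (1 / complex_of_real u * (1 / complex_of_real u)))) (at u)"
proof -
  have "((\<lambda>z. exp (- (s / z))) has_field_derivative
          exp (- (s / complex_of_real u)) * (s * (1 / complex_of_real u * (1 / complex_of_real u))))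
          (at (complex_of_real u))"
    using assms by (auto intro!: derivative_eq_intros simp: power2_eq_square field_simps)
  then show ?thesis
    by (rule has_vector_derivative_real_field)
qed

lemma derivs_bounded_inverse: "derivs_bounded N 0 1 0 (\<lambda>s u. 1 / complex_of_real u)"
proof (induction N)
  case 0
  show ?case
    by (auto simp: norm_divide dest: admissibleD intro!: weight_boundedI[of 1])
next
  case (Suc N)
  have "derivs_bounded N 1 3 0 (\<lambda>s u. (- 1) * (1 / complex_of_real u * (1 / complex_of_real u)))"
    using derivs_bounded_shift[OF derivs_bounded_cmult[where c = "- 1", OF derivs_bounded_mult[OF Suc.IH Suc.IH]]]
    by (simp add: numeral_3_eq_3)
  then show ?case
    using Suc.IH inverse_of_real_has_vector_derivative
    by (auto simp: derivs_bounded_imp_weight_bounded numeral_3_eq_3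
        intro!: exI[of _ "\<lambda>s u. (- 1) * (1 / complex_of_real u * (1 / complex_of_real u))"])
qed

lemma derivs_bounded_exp: "derivs_bounded N 0 0 0 (\<lambda>s u. exp (- (s / complex_of_real u)))"
proof (induction N)
  case 0
  show ?case
  proof (rule derivs_bounded.simps(1)[THEN iffD2], rule weight_boundedI[of 1])
    fix s u assume "admissible s u"
    then show "cmod (exp (- (s / complex_of_real u))) \<le> 1 * log_weight s ^ 0 * cmod s ^ 0 / u ^ 0"
      using admissibleD(1,2)[of s u] by (simp add: Re_divide_of_real)
  qed simp
next
  case (Suc N)
  have "derivs_bounded N (0 + (1 + (0 + 0))) (0 + (0 + (1 + 1))) (0 + (0 + (0 + 0)))
          (\<lambda>s u. exp (- (s / complex_of_real u)) * (s * (1 / complex_of_real u * (1 / complex_of_real u))))"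
    by (intro derivs_bounded_mult Suc.IH derivs_bounded_var derivs_bounded_inverse)
  then show ?case
    using Suc.IH exp_div_of_real_has_vector_derivative
    by (auto simp: derivs_bounded_imp_weight_bounded
        intro!: exI[of _ "\<lambda>s u. exp (- (s / complex_of_real u)) * (s * (1 / complex_of_real u * (1 / complex_of_real u)))"])
qed

lemma derivs_bounded_dG: "derivs_bounded N 0 1 0 dG"
proof -
  have "derivs_bounded N (0 + 0) (0 + 1) (0 + 0)
          (\<lambda>s u. (exp (- (s / complex_of_real u)) + (- 1)) * (1 / complex_of_real u))"
    by (intro derivs_bounded_mult derivs_bounded_add derivs_bounded_exp derivs_bounded_const derivs_bounded_inverse)
  moreover have "(\<lambda>s u. (exp (- (s / complex_of_real u)) + (- 1)) * (1 / complex_of_real u)) = dG"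
    by (simp add: fun_eq_iff dG_def)
  ultimately show ?thesis by simp
qed

lemma derivs_bounded_G: "derivs_bounded N 0 0 1 (\<lambda>s u. G u s)"
proof -
  have "weight_bounded 0 0 1 (\<lambda>s u. G u s)"
    by (rule weight_boundedI[of 3]) (simp_all add: norm_G_le)
  moreover have "derivs_bounded K 1 2 1 dG" for K
    using derivs_bounded_log_mono[OF derivs_bounded_shift[OF derivs_bounded_dG], where l' = 1]
    by (simp add: numeral_2_eq_2)
  ultimately show ?thesis
    using G_has_vector_derivative by (cases N) (auto simp: numeral_2_eq_2 intro!: exI[of _ dG])
qed

lemma derivs_bounded_G_power: "derivs_bounded N 0 0 k (\<lambda>s u. G u s ^ k)"
proof (induction k)
  case 0
  then show ?case using derivs_bounded_const[of N 1] by simp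
next
  case (Suc k)
  then show ?case using derivs_bounded_mult[OF derivs_bounded_G Suc.IH] by simp
qed

lemma G_power_has_vector_derivative:
  assumes "0 < u"
  shows "((\<lambda>v. G v s ^ m) has_vector_derivative of_nat m * (G u s ^ (m - 1) * dG s u)) (at u)"
proof -
  have "(((\<lambda>w. w ^ m) \<circ> (\<lambda>v. G v s)) has_vector_derivative dG s u * (of_nat m * G u s ^ (m - 1))) (at u)"
    by (rule field_vector_diff_chain_at[OF G_has_vector_derivative[OF assms]])
      (auto intro!: derivative_eq_intros)
  then show ?thesis
    by (simp add: o_def ac_simps)
qed

lemma derivs_bounded_G_power_deriv:
  "derivs_bounded N 0 1 (m - 1) (\<lambda>s u. of_nat m * (G u s ^ (m - 1) * dG s u))"
  using derivs_bounded_cmult[OF derivs_bounded_mult[OF derivs_bounded_G_power derivs_bounded_dG]] by simp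

theorem lemma9:
  fixes m \<nu> :: nat
  assumes "m \<ge> 1" and "\<nu> \<ge> 1"
  shows "\<exists>C>0. \<forall>(u::real) (s::complex).
           Re s = 1 \<longrightarrow> u \<ge> 1 \<longrightarrow> cmod s > u \<longrightarrow>
           cmod (nderiv \<nu> (\<lambda>v. (G v s) ^ m) u)
             \<le> C * (1 + ln (cmod s)) ^ (m - 1) / u ^ \<nu> * (cmod s / u) ^ (\<nu> - 1)"
proof -
  obtain k where \<nu>: "\<nu> = Suc k"
    using assms(2) by (cases \<nu>) auto
  obtain C where C: "\<And>s u. admissible s u \<Longrightarrow>
      cmod (nderiv k (\<lambda>u. of_nat m * (G u s ^ (m - 1) * dG s u)) u)
        \<le> C * log_weight s ^ (m - 1) * cmod s ^ k / u ^ (1 + 2 * k)"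
    using derivs_bounded_nderiv[OF derivs_bounded_G_power_deriv[of k m] order_refl] by fastforce
  show ?thesis
  proof (intro exI[of _ "max C 1"] conjI allI impI)
    fix u :: real and s :: complex
    assume "Re s = 1" "1 \<le> u" "u < cmod s"
    then have adm: "admissible s u" by (simp add: admissible_def)
    note F = admissibleD[OF adm]
    have "nderiv \<nu> (\<lambda>v. G v s ^ m) u = nderiv k (\<lambda>u. of_nat m * (G u s ^ (m - 1) * dG s u)) u"
      unfolding \<nu> using F(2) G_power_has_vector_derivative by (intro nderiv_eq_derivative)
    then have "cmod (nderiv \<nu> (\<lambda>v. G v s ^ m) u) \<le> C * (log_weight s ^ (m - 1) * cmod s ^ k / u ^ (1 + 2 * k))"
      using C[OF adm] by simp
    also have "\<dots> \<le> max C 1 * (log_weight s ^ (m - 1) * cmod s ^ k / u ^ (1 + 2 * k))"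
      using F by (intro mult_right_mono) auto
    also have "\<dots> = max C 1 * (1 + ln (cmod s)) ^ (m - 1) / u ^ \<nu> * (cmod s / u) ^ (\<nu> - 1)"
      by (simp add: \<nu> log_weight_def power_divide power_add mult_2)
    finally show "cmod (nderiv \<nu> (\<lambda>v. G v s ^ m) u)
        \<le> max C 1 * (1 + ln (cmod s)) ^ (m - 1) / u ^ \<nu> * (cmod s / u) ^ (\<nu> - 1)" .
  qed simp
qed

end
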